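(* Let $n\ge 3$. If $\mu$ is a symmetric measure on $L_n$ such that $C_{L_n}=C_\mu$, then $C_\mu=\max\{M_1(\mu),C^0_\mu\}$.
   Context: $L_n$ is the path graph with vertices $\{1,\dots,n\}$ and edges $\{j,j+1\}$, with distance $|i-j|$. A measure on $L_n$ is a weight function $\mu:\{1,\dots,n\}\to(0,\infty)$, $\mu(A)=\sum_{v\in A}\mu(v)$; it is symmetric if $\mu(j)=\mu(n+1-j)$ for all $j$. Closed balls: $B(x,r)=\{y:|x-y|\le r\}$. $C_\mu=\sup\{\mu(B(x,2k+1))/\mu(B(x,k)):1\le x\le n,\ k\ge0\}$, $C_{L_n}=\inf_\mu C_\mu$, $C^0_\mu=\max_x\mu(B(x,1))/\mu(x)$, and $M_1(\mu)=\sup\{\mu(B(1,2k+1))/\mu(B(1,k)): k\in\mathbb Z,\ 0\le k<\lceil\frac{n-2}{3}\rceil\}$. *)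

theory Defs
  imports Complex_Main
begin

text \<open>Path graph L_n on vertices {1..n}; a measure is a function positive on {1..n}.\<close>

definition is_measure :: "nat \<Rightarrow> (nat \<Rightarrow> real) \<Rightarrow> bool" where
  "is_measure n \<mu> \<longleftrightarrow> (\<forall>j\<in>{1..n}. \<mu> j > 0)"

definition symmetric_measure :: "nat \<Rightarrow> (nat \<Rightarrow> real) \<Rightarrow> bool" where
  "symmetric_measure n \<mu> \<longleftrightarrow> is_measure n \<mu> \<and> (\<forall>j\<in>{1..n}. \<mu> j = \<mu> (n + 1 - j))"

definition meas :: "(nat \<Rightarrow> real) \<Rightarrow> nat set \<Rightarrow> real" where
  "meas \<mu> A = (\<Sum>v\<in>A. \<mu> v)"

definition ball_L :: "nat \<Rightarrow> nat \<Rightarrow> nat \<Rightarrow> nat set" where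
  "ball_L n x r = {y\<in>{1..n}. \<bar>int x - int y\<bar> \<le> int r}"

definition C_mu :: "nat \<Rightarrow> (nat \<Rightarrow> real) \<Rightarrow> real" where
  "C_mu n \<mu> = Sup {meas \<mu> (ball_L n x (2*k+1)) / meas \<mu> (ball_L n x k) | x k. x \<in> {1..n}}"

definition C_L :: "nat \<Rightarrow> real" where
  "C_L n = Inf {C_mu n \<mu> | \<mu>. is_measure n \<mu>}"

definition C0_mu :: "nat \<Rightarrow> (nat \<Rightarrow> real) \<Rightarrow> real" where
  "C0_mu n \<mu> = Max {meas \<mu> (ball_L n x 1) / \<mu> x | x. x \<in> {1..n}}"

definition M1 :: "nat \<Rightarrow> (nat \<Rightarrow> real) \<Rightarrow> real" where
  "M1 n \<mu> = Sup {meas \<mu> (ball_L n 1 (2*k+1)) / meas \<mu> (ball_L n 1 k) | k::nat.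
                   int k < \<lceil>(real n - 2) / 3\<rceil>}"

end

theory Submission
  imports Defs
begin

text \<open>
  An optimal measure satisfies \<open>C\<^sub>\<mu> = C\<^sup>0\<^sub>\<mu>\<close>, which gives the claim because \<open>M\<^sub>1(\<mu>)\<close> and
  \<open>C\<^sup>0\<^sub>\<mu>\<close> are among the ratios whose supremum is \<open>C\<^sub>\<mu>\<close>.
  Adding a constant \<open>e > 0\<close> to \<open>\<mu>\<close> pushes each ratio \<open>\<mu>(B(x,2k+1)) / \<mu>(B(x,k))\<close> towards
  the ratio of cardinalities, which is at most \<open>7/3\<close> for \<open>k \<ge> 1\<close>.
  For a symmetric measure \<open>C\<^sup>0\<^sub>\<mu> > 7/3\<close> (look at a point where \<open>\<mu>\<close> is minimal), so if
  \<open>C\<^sup>0\<^sub>\<mu> < C\<^sub>\<mu>\<close>, a small shift makes every ratio strictly smaller than \<open>C\<^sub>\<mu>\<close>,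
  contradicting optimality.
\<close>

definition doubling_ratio :: "nat \<Rightarrow> (nat \<Rightarrow> real) \<Rightarrow> nat \<Rightarrow> nat \<Rightarrow> real" where
  "doubling_ratio n \<mu> x k = meas \<mu> (ball_L n x (2*k+1)) / meas \<mu> (ball_L n x k)"

lemma C_mu_eq_Sup_doubling_ratio:
  "C_mu n \<mu> = Sup {doubling_ratio n \<mu> x k | x k. x \<in> {1..n}}"
  by (simp add: C_mu_def doubling_ratio_def)

lemma ball_L_eq_atLeastAtMost: "ball_L n x r = {max 1 (x - r) .. min n (x + r)}"
proof (rule set_eqI)
  fix y
  show "y \<in> ball_L n x r \<longleftrightarrow> y \<in> {max 1 (x - r) .. min n (x + r)}"
    unfolding ball_L_def by (simp add: abs_le_iff) arith
qed

lemma ball_L_subset: "ball_L n x r \<subseteq> {1..n}"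
  unfolding ball_L_eq_atLeastAtMost by auto

lemma finite_ball_L: "finite (ball_L n x r)"
  unfolding ball_L_eq_atLeastAtMost by simp

lemma center_in_ball_L: "x \<in> {1..n} \<Longrightarrow> x \<in> ball_L n x r"
  unfolding ball_L_eq_atLeastAtMost by auto

lemma ball_L_0: "x \<in> {1..n} \<Longrightarrow> ball_L n x 0 = {x}"
  unfolding ball_L_eq_atLeastAtMost by (simp add: max_def min_def)

lemma ball_L_eq_all: "x \<in> {1..n} \<Longrightarrow> n \<le> r \<Longrightarrow> ball_L n x r = {1..n}"
  unfolding ball_L_eq_atLeastAtMost by (simp add: max_def min_def)

lemma card_ball_L_1: "card (ball_L n x 1) \<le> 3"
  unfolding ball_L_eq_atLeastAtMost card_atLeastAtMost
  by (auto simp: max_def min_def split: if_splits)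

lemma card_ball_L_double:
  assumes "x \<in> {1..n}" "1 \<le> k"
  shows "3 * card (ball_L n x (2*k+1)) \<le> 7 * card (ball_L n x k)"
  using assms unfolding ball_L_eq_atLeastAtMost card_atLeastAtMost
  by (auto simp: max_def min_def split: if_splits)

lemma meas_shift: "finite A \<Longrightarrow> meas (\<lambda>j. \<mu> j + e) A = meas \<mu> A + e * card A"
  unfolding meas_def by (simp add: sum.distrib mult.commute)

lemma meas_ball_L_pos:
  assumes "is_measure n \<mu>" "x \<in> {1..n}"
  shows "0 < meas \<mu> (ball_L n x r)"
  unfolding meas_def
proof (rule sum_pos[OF finite_ball_L])
  show "ball_L n x r \<noteq> {}" using center_in_ball_L[OF assms(2)] by blast
  show "\<And>i. i \<in> ball_L n x r \<Longrightarrow> 0 < \<mu> i"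
    using assms(1) ball_L_subset unfolding is_measure_def by blast
qed

lemma doubling_ratio_nonneg:
  "is_measure n \<mu> \<Longrightarrow> x \<in> {1..n} \<Longrightarrow> 0 \<le> doubling_ratio n \<mu> x k"
  unfolding doubling_ratio_def using meas_ball_L_pos by (simp add: less_imp_le)

lemma doubling_ratio_0:
  "x \<in> {1..n} \<Longrightarrow> doubling_ratio n \<mu> x 0 = meas \<mu> (ball_L n x 1) / \<mu> x"
  by (simp add: doubling_ratio_def ball_L_0 meas_def)

text \<open>The ratio does not change once \<open>k \<ge> n\<close>, so only finitely many values occur.\<close>

lemma doubling_ratios_subset:
  "{doubling_ratio n \<mu> x k | x k. x \<in> {1..n}}
     \<subseteq> (\<lambda>(x, k). doubling_ratio n \<mu> x k) ` ({1..n} \<times> {0..n})"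
proof
  fix v assume "v \<in> {doubling_ratio n \<mu> x k | x k. x \<in> {1..n}}"
  then obtain x k where v: "v = doubling_ratio n \<mu> x k" and x: "x \<in> {1..n}" by blast
  have "v = doubling_ratio n \<mu> x (min k n)"
    using x by (cases "k \<le> n") (simp_all add: v doubling_ratio_def ball_L_eq_all)
  then show "v \<in> (\<lambda>(x, k). doubling_ratio n \<mu> x k) ` ({1..n} \<times> {0..n})"
    using x by (intro image_eqI[where x = "(x, min k n)"]) auto
qed

lemma finite_doubling_ratios: "finite {doubling_ratio n \<mu> x k | x k. x \<in> {1..n}}"
  by (rule finite_subset[OF doubling_ratios_subset]) auto

lemma doubling_ratio_le_C_mu: "x \<in> {1..n} \<Longrightarrow> doubling_ratio n \<mu> x k \<le> C_mu n \<mu>"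
  unfolding C_mu_eq_Sup_doubling_ratio
  by (rule cSup_upper) (use finite_doubling_ratios bdd_above_finite in auto)

lemma C_mu_less:
  assumes "1 \<le> n" "\<And>x k. x \<in> {1..n} \<Longrightarrow> doubling_ratio n \<mu> x k < c"
  shows "C_mu n \<mu> < c"
proof -
  let ?S = "{doubling_ratio n \<mu> x k | x k. x \<in> {1..n}}"
  have "?S \<noteq> {}" using assms(1) by auto
  then have "Sup ?S \<in> ?S"
    using cSup_eq_Max[OF finite_doubling_ratios] Max_in[OF finite_doubling_ratios] by simp
  then show ?thesis using assms(2) unfolding C_mu_eq_Sup_doubling_ratio by auto
qed

lemma C_L_le_C_mu:
  assumes "is_measure n \<mu>" "1 \<le> n"
  shows "C_L n \<le> C_mu n \<mu>"
proof -
  have "0 \<le> C_mu n \<nu>" if "is_measure n \<nu>" for \<nu>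
    using doubling_ratio_nonneg[OF that, of 1 0] doubling_ratio_le_C_mu[of 1 n \<nu> 0] assms(2)
    by simp
  then show ?thesis
    unfolding C_L_def using assms(1) by (intro cInf_lower bdd_belowI[of _ 0]) auto
qed

lemma M1_le_C_mu:
  assumes "3 \<le> n"
  shows "M1 n \<mu> \<le> C_mu n \<mu>"
  unfolding M1_def
proof (rule cSup_least)
  have "int 0 < \<lceil>(real n - 2) / 3\<rceil>" using assms by simp
  then show "{meas \<mu> (ball_L n 1 (2*k+1)) / meas \<mu> (ball_L n 1 k) | k.
      int k < \<lceil>(real n - 2) / 3\<rceil>} \<noteq> {}" by blast
next
  fix v assume "v \<in> {meas \<mu> (ball_L n 1 (2*k+1)) / meas \<mu> (ball_L n 1 k) | k.
      int k < \<lceil>(real n - 2) / 3\<rceil>}"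
  then obtain k where "v = doubling_ratio n \<mu> 1 k" unfolding doubling_ratio_def by blast
  then show "v \<le> C_mu n \<mu>" using doubling_ratio_le_C_mu[of 1 n \<mu> k] assms by simp
qed

lemma C0_mu_eq_Max: "C0_mu n \<mu> = Max ((\<lambda>x. doubling_ratio n \<mu> x 0) ` {1..n})"
proof -
  have "{meas \<mu> (ball_L n x 1) / \<mu> x | x. x \<in> {1..n}} = (\<lambda>x. doubling_ratio n \<mu> x 0) ` {1..n}"
    by (auto simp: doubling_ratio_0)
  then show ?thesis by (simp add: C0_mu_def)
qed

lemma doubling_ratio_0_le_C0_mu: "x \<in> {1..n} \<Longrightarrow> doubling_ratio n \<mu> x 0 \<le> C0_mu n \<mu>"
  unfolding C0_mu_eq_Max by simp

lemma C0_mu_le_C_mu: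
  assumes "1 \<le> n"
  shows "C0_mu n \<mu> \<le> C_mu n \<mu>"
proof -
  have "C0_mu n \<mu> \<in> (\<lambda>x. doubling_ratio n \<mu> x 0) ` {1..n}"
    unfolding C0_mu_eq_Max using assms by (intro Max_in) auto
  then show ?thesis using doubling_ratio_le_C_mu by auto
qed

lemma doubling_ratio_0_at_interior_minimum:
  assumes "is_measure n \<mu>" "2 \<le> j" "j + 1 \<le> n" "\<And>i. i \<in> {1..n} \<Longrightarrow> \<mu> j \<le> \<mu> i"
  shows "3 \<le> doubling_ratio n \<mu> j 0"
proof -
  have j: "j \<in> {1..n}" using assms(2,3) by simp
  have ball: "ball_L n j 1 = {j-1..j+1}" and card: "card {j-1..j+1} = 3"
    using assms(2,3) unfolding ball_L_eq_atLeastAtMost by (simp_all add: max_def min_def)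
  have "3 * \<mu> j = (\<Sum>l\<in>{j-1..j+1}. \<mu> j)" by (simp only: sum_constant card)
  also have "\<dots> \<le> (\<Sum>l\<in>{j-1..j+1}. \<mu> l)" using assms(2,3) by (intro sum_mono assms(4)) auto
  also have "\<dots> = meas \<mu> (ball_L n j 1)" unfolding ball meas_def ..
  finally have "3 * \<mu> j \<le> meas \<mu> (ball_L n j 1)" .
  moreover have "0 < \<mu> j" using assms(1) j unfolding is_measure_def by blast
  ultimately show ?thesis by (simp add: doubling_ratio_0[OF j] le_divide_eq)
qed

lemma doubling_ratio_0_near_minimal_endpoint:
  assumes "3 \<le> n" "is_measure n \<mu>" "\<And>i. i \<in> {1..n} \<Longrightarrow> \<mu> 1 \<le> \<mu> i"
  shows "7/3 < max (doubling_ratio n \<mu> 1 0) (doubling_ratio n \<mu> 2 0)"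
proof (rule ccontr)
  have "ball_L n 1 1 = {1, 2}" "ball_L n 2 1 = {1, 2, 3}"
    using assms(1) unfolding ball_L_eq_atLeastAtMost by (auto simp: min_def)
  then have r1: "doubling_ratio n \<mu> 1 0 = (\<mu> 1 + \<mu> 2) / \<mu> 1"
    and r2: "doubling_ratio n \<mu> 2 0 = (\<mu> 1 + (\<mu> 2 + \<mu> 3)) / \<mu> 2"
    using assms(1) by (simp_all add: doubling_ratio_0 meas_def)
  have p1: "0 < \<mu> 1" and p2: "0 < \<mu> 2" and m3: "\<mu> 1 \<le> \<mu> 3"
    using assms unfolding is_measure_def by simp_all
  assume "\<not> ?thesis"
  then have "max ((\<mu> 1 + \<mu> 2) / \<mu> 1) ((\<mu> 1 + (\<mu> 2 + \<mu> 3)) / \<mu> 2) \<le> 7/3"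
    unfolding r1 r2 by (simp only: not_less)
  then have "(\<mu> 1 + \<mu> 2) / \<mu> 1 \<le> 7/3" "(\<mu> 1 + (\<mu> 2 + \<mu> 3)) / \<mu> 2 \<le> 7/3"
    by (simp_all only: max.bounded_iff)
  then have "\<mu> 1 + \<mu> 2 \<le> 7/3 * \<mu> 1" "\<mu> 1 + (\<mu> 2 + \<mu> 3) \<le> 7/3 * \<mu> 2"
    using p1 p2 by (simp_all add: pos_divide_le_eq)
  text \<open>These give \<open>\<mu> 2 \<le> 4/3 \<mu> 1\<close>, while \<open>\<mu> 3 \<ge> \<mu> 1\<close> gives \<open>2 \<mu> 1 \<le> 4/3 \<mu> 2\<close>.\<close>
  then show False using m3 p1 by linarith
qed

lemma C0_mu_gt_7_3:
  assumes "3 \<le> n" "symmetric_measure n \<mu>"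
  shows "7/3 < C0_mu n \<mu>"
proof -
  have \<mu>: "is_measure n \<mu>" using assms(2) unfolding symmetric_measure_def by simp
  have "Min (\<mu> ` {1..n}) \<in> \<mu> ` {1..n}" using assms(1) by (intro Min_in) auto
  then obtain j where j: "j \<in> {1..n}" and "\<mu> j = Min (\<mu> ` {1..n})" by auto
  then have j_min: "\<mu> j \<le> \<mu> i" if "i \<in> {1..n}" for i using that by simp
  show ?thesis
  proof (cases "\<mu> 1 = \<mu> j")
    case True
    then have "7/3 < max (doubling_ratio n \<mu> 1 0) (doubling_ratio n \<mu> 2 0)"
      using j_min by (intro doubling_ratio_0_near_minimal_endpoint[OF assms(1) \<mu>]) simp
    moreover have "max (doubling_ratio n \<mu> 1 0) (doubling_ratio n \<mu> 2 0) \<le> C0_mu n \<mu>"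
      using assms(1) by (simp add: doubling_ratio_0_le_C0_mu)
    ultimately show ?thesis by linarith
  next
    case False
    have "\<forall>j\<in>{1..n}. \<mu> j = \<mu> (n + 1 - j)" using assms(2) unfolding symmetric_measure_def by blast
    then have "\<mu> 1 = \<mu> (n + 1 - 1)" by (rule bspec) (use assms(1) in simp)
    then have "j \<noteq> 1" "j \<noteq> n" using False by auto
    then have "3 \<le> doubling_ratio n \<mu> j 0"
      using j j_min by (intro doubling_ratio_0_at_interior_minimum[OF \<mu>]) auto
    then show ?thesis using doubling_ratio_0_le_C0_mu[OF j, of \<mu>] by linarith
  qed
qed

lemma doubling_ratio_shift_less:
  assumes "is_measure n \<mu>" "x \<in> {1..n}" "1 \<le> k" "0 < e"
    and "7/3 < c" "doubling_ratio n \<mu> x k \<le> c"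
  shows "doubling_ratio n (\<lambda>j. \<mu> j + e) x k < c"
proof -
  let ?B1 = "ball_L n x k" and ?B2 = "ball_L n x (2*k+1)"
  have meas_B1: "0 < meas \<mu> ?B1" using meas_ball_L_pos[OF assms(1,2)] .
  have "meas \<mu> ?B2 \<le> c * meas \<mu> ?B1"
    using assms(6) meas_B1 by (simp add: doubling_ratio_def pos_divide_le_eq)
  moreover have "real (card ?B2) < c * card ?B1"
  proof -
    have "0 < card ?B1" using center_in_ball_L[OF assms(2)] finite_ball_L card_gt_0_iff by blast
    have "real (card ?B2) \<le> 7/3 * card ?B1" using card_ball_L_double[OF assms(2,3)] by linarith
    also have "\<dots> < c * card ?B1"
      using assms(5) \<open>0 < card ?B1\<close> by (intro mult_strict_right_mono) simp_all
    finally show ?thesis .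
  qed
  ultimately have "meas \<mu> ?B2 + e * card ?B2 < c * (meas \<mu> ?B1 + e * card ?B1)"
    using assms(4) by (simp add: add_le_less_mono algebra_simps)
  then show ?thesis
    using meas_B1 assms(4)
    by (simp add: doubling_ratio_def meas_shift[OF finite_ball_L] divide_less_eq add_pos_nonneg)
qed

lemma doubling_ratio_0_shift_less:
  assumes "is_measure n \<mu>" "x \<in> {1..n}" "0 < e"
    and "doubling_ratio n \<mu> x 0 \<le> c\<^sub>0" "c\<^sub>0 < c" "3 * e \<le> (c - c\<^sub>0) * \<mu> x"
  shows "doubling_ratio n (\<lambda>j. \<mu> j + e) x 0 < c"
proof -
  have pos: "0 < \<mu> x" using assms(1,2) unfolding is_measure_def by blast
  have "0 < c" using doubling_ratio_nonneg[OF assms(1,2), where k=0] assms(4,5) by linarith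
  have "meas \<mu> (ball_L n x 1) \<le> c\<^sub>0 * \<mu> x"
    using assms(4) pos by (simp add: doubling_ratio_0[OF assms(2)] divide_le_eq)
  moreover have "e * card (ball_L n x 1) \<le> e * 3"
    using card_ball_L_1 assms(3) by (simp add: mult_left_mono)
  ultimately have "meas \<mu> (ball_L n x 1) + e * card (ball_L n x 1) \<le> c * \<mu> x"
    using assms(6) by (simp add: algebra_simps)
  also have "\<dots> < c * (\<mu> x + e)" using \<open>0 < c\<close> assms(3) by simp
  finally show ?thesis
    using pos assms(3)
    by (simp add: doubling_ratio_0[OF assms(2)] meas_shift[OF finite_ball_L] divide_less_eq)
qed

lemma optimal_measure_C_mu_le_C0_mu:
  assumes "1 \<le> n" "is_measure n \<mu>" "C_L n = C_mu n \<mu>" "7/3 < C_mu n \<mu>"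
  shows "C_mu n \<mu> \<le> C0_mu n \<mu>"
proof (rule ccontr)
  define C where "C = C_mu n \<mu>"
  assume "\<not> C_mu n \<mu> \<le> C0_mu n \<mu>"
  then have gap: "C0_mu n \<mu> < C" unfolding C_def by simp
  have pos: "0 < \<mu> i" if "i \<in> {1..n}" for i using assms(2) that unfolding is_measure_def by blast
  define m where "m = Min (\<mu> ` {1..n})"
  have m_le: "m \<le> \<mu> x" if "x \<in> {1..n}" for x unfolding m_def using that by simp
  have "0 < m" unfolding m_def using Min_in[of "\<mu> ` {1..n}"] pos assms(1) by fastforce
  define e where "e = (C - C0_mu n \<mu>) * m / 3"
  have "0 < e" unfolding e_def using gap \<open>0 < m\<close> by simp
  define \<nu> where "\<nu> = (\<lambda>j. \<mu> j + e)"
  have "is_measure n \<nu>" using pos \<open>0 < e\<close> unfolding is_measure_def \<nu>_def by (simp add: add_pos_pos)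
  have "C_mu n \<nu> < C"
  proof (rule C_mu_less[OF assms(1)])
    fix x k assume x: "x \<in> {1..n}"
    have le_C: "doubling_ratio n \<mu> x k \<le> C" unfolding C_def by (rule doubling_ratio_le_C_mu[OF x])
    show "doubling_ratio n \<nu> x k < C"
    proof (cases "k = 0")
      case True
      have "3 * e \<le> (C - C0_mu n \<mu>) * \<mu> x"
        unfolding e_def using m_le[OF x] gap by simp
      then show ?thesis unfolding True \<nu>_def
        using doubling_ratio_0_shift_less[OF assms(2) x \<open>0 < e\<close> doubling_ratio_0_le_C0_mu[OF x] gap]
        by simp
    next
      case False
      then show ?thesis unfolding \<nu>_def using assms(4) le_C \<open>0 < e\<close>
        by (intro doubling_ratio_shift_less[OF assms(2) x]) (simp_all add: C_def)
    qed
  qed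
  moreover have "C \<le> C_mu n \<nu>"
    using C_L_le_C_mu[OF \<open>is_measure n \<nu>\<close> assms(1)] assms(3) unfolding C_def by simp
  ultimately show False by simp
qed

theorem proposition6p1:
  fixes n :: nat and \<mu> :: "nat \<Rightarrow> real"
  assumes "n \<ge> 3"
    and "symmetric_measure n \<mu>"
    and "C_L n = C_mu n \<mu>"
  shows "C_mu n \<mu> = max (M1 n \<mu>) (C0_mu n \<mu>)"
proof -
  have "1 \<le> n" using assms(1) by simp
  have \<mu>: "is_measure n \<mu>" using assms(2) unfolding symmetric_measure_def by simp
  have C0_le_C: "C0_mu n \<mu> \<le> C_mu n \<mu>" using C0_mu_le_C_mu[OF \<open>1 \<le> n\<close>] .
  moreover have "7/3 < C_mu n \<mu>" using C0_mu_gt_7_3[OF assms(1,2)] C0_le_C by linarith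
  then have "C_mu n \<mu> \<le> C0_mu n \<mu>"
    using optimal_measure_C_mu_le_C0_mu[OF \<open>1 \<le> n\<close> \<mu> assms(3)] by blast
  moreover have "M1 n \<mu> \<le> C_mu n \<mu>" using M1_le_C_mu[OF assms(1)] .
  ultimately show ?thesis by simp
qed

end
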